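(* Let $a<b$ be real numbers, let $X:=C_0[a,b]:=\{v\in C[a,b]\mid v(a)=v(b)=0\}$, let $g\in C[a,b]$ with $g\neq 0$, let $s\geq 2$ be an integer and let $p\in[1,\infty]$. Equip $X$ with the norm $\|\cdot\|_p$ (the $L^p(a,b)$-norm, with $\|\cdot\|_\infty$ the supremum norm). Then $$\lim_{h\in X,\ \|h\|_p\to 0}\ \frac{1}{\|h\|_p}\int_a^b g\,h^s=0 \quad\Longleftrightarrow\quad p\geq s .$$
   Context: Integrals $\int_a^b \varphi$ denote the Riemann integral $\int_a^b\varphi(x)\,dx$. The limit is taken over $h\in X\setminus\{0\}$ with $\|h\|_p\to 0$. *)

theory Defs
  imports "HOL-Analysis.Analysis"
begin

text \<open>The space C_0[a,b]: continuous functions on [a,b] vanishing at both endpoints.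
  Functions are represented as real-valued functions on the reals; only their values
  on [a,b] matter.\<close>
definition C0 :: "real \<Rightarrow> real \<Rightarrow> (real \<Rightarrow> real) set" where
  "C0 a b = {v. continuous_on {a..b} v \<and> v a = 0 \<and> v b = 0}"

definition Lp_norm :: "real \<Rightarrow> real \<Rightarrow> ereal \<Rightarrow> (real \<Rightarrow> real) \<Rightarrow> real" where
  "Lp_norm a b p h =
     (if p = \<infinity> then (SUP x\<in>{a..b}. \<bar>h x\<bar>)
      else (integral {a..b} (\<lambda>x. \<bar>h x\<bar> powr real_of_ereal p)) powr (1 / real_of_ereal p))"

end

theory Submission
  imports Defs
begin

text \<open>For p \<ge> s, Jensen's inequality for the concave power t \<mapsto> t powr (s/p) gives
  |\<integral> g h^s| \<le> K \<parallel>h\<parallel>_p^s, so the quotient is O(\<parallel>h\<parallel>_p^(s-1)) and tends to 0 as s \<ge> 2.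
  For p < s, test with tent functions of half-width w and height w powr (-1/s) centred where g
  has a fixed sign: then \<integral> g h^s stays bounded away from 0 while
  \<parallel>h\<parallel>_p \<le> 2 w powr (1/p - 1/s) \<rightarrow> 0.\<close>

lemma continuous_on_powr_nonneg:
  fixes f :: "'a::topological_space \<Rightarrow> real"
  assumes "continuous_on S f" "\<And>x. x \<in> S \<Longrightarrow> 0 \<le> f x" "0 < \<theta>"
  shows "continuous_on S (\<lambda>x. f x powr \<theta>)"
  using assms by (intro continuous_on_powr' continuous_on_const) auto

lemma abs_le_sup_norm:
  assumes "continuous_on {a..b} h" "x \<in> {a..b}"
  shows "\<bar>h x\<bar> \<le> Lp_norm a b \<infinity> h"
proof -
  have "continuous_on {a..b} (\<lambda>x. \<bar>h x\<bar>)" using assms(1) by (intro continuous_intros)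
  then have "bdd_above ((\<lambda>x. \<bar>h x\<bar>) ` {a..b})"
    by (intro bounded_imp_bdd_above compact_imp_bounded compact_continuous_image) auto
  then show ?thesis using assms(2) by (auto simp: Lp_norm_def intro!: cSUP_upper)
qed

lemma Lp_norm_nonneg:
  assumes "a \<le> b" "continuous_on {a..b} h"
  shows "0 \<le> Lp_norm a b p h"
proof (cases "p = \<infinity>")
  case True
  then show ?thesis using abs_le_sup_norm[OF assms(2), of a] assms(1) by auto
qed (simp add: Lp_norm_def)

lemma continuous_on_interval_bounded:
  fixes g :: "real \<Rightarrow> real"
  assumes "continuous_on {a..b} g"
  obtains M where "M > 0" "\<And>x. x \<in> {a..b} \<Longrightarrow> \<bar>g x\<bar> \<le> M"
proof -
  have "bounded (g ` {a..b})"
    by (rule compact_imp_bounded, rule compact_continuous_image) (use assms in auto)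
  then show ?thesis using that by (auto simp: bounded_pos)
qed

lemma ratio_vanishes_of_power_bound:
  fixes N I :: "'h \<Rightarrow> real"
  assumes "K > 0" "s \<ge> 2"
    and "\<And>h. h \<in> A \<Longrightarrow> 0 \<le> N h"
    and "\<And>h. h \<in> A \<Longrightarrow> 0 < N h \<Longrightarrow> \<bar>I h\<bar> \<le> K * N h ^ s"
  shows "\<forall>\<epsilon>>0. \<exists>\<delta>>0. \<forall>h\<in>A. Q h \<and> N h < \<delta> \<longrightarrow> \<bar>(1 / N h) * I h\<bar> < \<epsilon>"
proof (intro allI impI)
  fix \<epsilon> :: real assume "\<epsilon> > 0"
  show "\<exists>\<delta>>0. \<forall>h\<in>A. Q h \<and> N h < \<delta> \<longrightarrow> \<bar>(1 / N h) * I h\<bar> < \<epsilon>"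
  proof (intro exI[of _ "min 1 (\<epsilon> / K)"] conjI ballI impI)
    show "0 < min 1 (\<epsilon> / K)" using \<open>\<epsilon> > 0\<close> assms(1) by auto
    fix h assume h: "h \<in> A" "Q h \<and> N h < min 1 (\<epsilon> / K)"
    show "\<bar>(1 / N h) * I h\<bar> < \<epsilon>"
    proof (cases "N h = 0")
      case True then show ?thesis using \<open>\<epsilon> > 0\<close> by simp
    next
      case False
      with assms(3)[OF h(1)] have pos: "0 < N h" by simp
      have "N h ^ s = N h ^ (s - 2) * N h ^ 2"
        using assms(2) by (metis power_add le_add_diff_inverse2)
      also have "\<dots> \<le> N h ^ 2"
        using pos h(2) by (intro mult_left_le_one_le power_le_one) auto
      finally have "N h ^ s \<le> N h * N h" by (simp add: power2_eq_square)
      have "\<bar>(1 / N h) * I h\<bar> = \<bar>I h\<bar> / N h" using pos by simp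
      also have "\<dots> \<le> K * N h ^ s / N h"
        using assms(4)[OF h(1) pos] pos by (simp add: divide_right_mono)
      also have "\<dots> \<le> K * N h"
        using \<open>N h ^ s \<le> N h * N h\<close> pos assms(1) by (simp add: divide_le_eq mult.assoc)
      also have "\<dots> < \<epsilon>" using h(2) assms(1) by (simp add: pos_less_divide_eq mult.commute)
      finally show ?thesis .
    qed
  qed
qed

subsection \<open>The upper bound for \<open>p \<ge> s\<close>\<close>

lemma integral_power_le_sup_norm_power:
  fixes g :: "real \<Rightarrow> real"
  assumes "a < b" "continuous_on {a..b} g"
  obtains K where "K > 0" "\<And>h. continuous_on {a..b} h \<Longrightarrow>
     \<bar>integral {a..b} (\<lambda>x. g x * h x ^ s)\<bar> \<le> K * Lp_norm a b \<infinity> h ^ s"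
proof -
  obtain M where M: "M > 0" "\<And>x. x \<in> {a..b} \<Longrightarrow> \<bar>g x\<bar> \<le> M"
    using continuous_on_interval_bounded[OF assms(2)] by blast
  show ?thesis
  proof (rule that[of "M * (b - a)"])
    show "0 < M * (b - a)" using M assms by simp
    fix h :: "real \<Rightarrow> real" assume hc: "continuous_on {a..b} h"
    define N where "N = Lp_norm a b \<infinity> h"
    have "norm (integral {a..b} (\<lambda>x. g x * h x ^ s)) \<le> integral {a..b} (\<lambda>x. M * N ^ s)"
    proof (rule integral_norm_bound_integral)
      show "(\<lambda>x. g x * h x ^ s) integrable_on {a..b}"
        by (intro integrable_continuous_interval continuous_intros assms(2) hc)
      fix x assume x: "x \<in> {a..b}"
      have "\<bar>g x\<bar> * \<bar>h x\<bar> ^ s \<le> M * N ^ s"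
        using M abs_le_sup_norm[OF hc x] x
        by (intro mult_mono power_mono) (auto simp: N_def)
      then show "norm (g x * h x ^ s) \<le> M * N ^ s" by (simp add: abs_mult power_abs)
    qed (rule integrable_const_ivl)
    then show "\<bar>integral {a..b} (\<lambda>x. g x * h x ^ s)\<bar> \<le> M * (b - a) * N ^ s"
      using assms(1) by (simp add: mult_ac)
  qed
qed

lemma powr_le_tangent_line:
  fixes y c \<theta> :: real
  assumes "0 \<le> y" "0 < c" "0 < \<theta>" "\<theta> \<le> 1"
  shows "y powr \<theta> \<le> c powr (\<theta> - 1) * (\<theta> * y + (1 - \<theta>) * c)"
proof (cases "y = 0")
  case True then show ?thesis using assms by simp
next
  case False
  then have "y powr \<theta> * c powr (1 - \<theta>) \<le> \<theta> * y + (1 - \<theta>) * c"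
    using assms by (intro Youngs_inequality_0) auto
  then have "c powr (\<theta> - 1) * (y powr \<theta> * c powr (1 - \<theta>)) \<le> c powr (\<theta> - 1) * (\<theta> * y + (1 - \<theta>) * c)"
    by (intro mult_left_mono) auto
  moreover have "c powr (\<theta> - 1) * (y powr \<theta> * c powr (1 - \<theta>)) = y powr \<theta>"
    using assms by (simp add: powr_add[symmetric] mult.assoc mult.left_commute[of "c powr _"])
  ultimately show ?thesis by simp
qed

lemma abs_power_eq_powr_powr:
  fixes x P :: real
  assumes "P > 0" "s > 0"
  shows "\<bar>x\<bar> ^ s = (\<bar>x\<bar> powr P) powr (real s / P)"
  using assms by (cases "x = 0") (simp_all add: powr_powr powr_realpow)

text \<open>Proved by comparing f powr \<theta> pointwise with the tangent line at the mean value of f.\<close>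
lemma integral_powr_le_powr_integral:
  fixes f :: "real \<Rightarrow> real"
  assumes "a < b" "continuous_on {a..b} f" "\<And>x. x \<in> {a..b} \<Longrightarrow> 0 \<le> f x"
    and "0 < \<theta>" "\<theta> \<le> 1" "0 < integral {a..b} f"
  shows "integral {a..b} (\<lambda>x. f x powr \<theta>) \<le> (b - a) powr (1 - \<theta>) * integral {a..b} f powr \<theta>"
proof -
  define J where "J = integral {a..b} f"
  define c where "c = J / (b - a)"
  have c0: "c > 0" using assms(1,6) by (simp add: c_def J_def)
  have Jc: "J = c * (b - a)" using assms(1) by (simp add: c_def)
  have "(f has_integral J) {a..b}"
    unfolding J_def using assms(2) by (intro integrable_integral integrable_continuous_interval)
  then have mean: "((\<lambda>x. c powr (\<theta> - 1) * (\<theta> * f x + (1 - \<theta>) * c)) has_integral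
      c powr (\<theta> - 1) * (\<theta> * J + (b - a) * ((1 - \<theta>) * c))) {a..b}"
    using has_integral_const_real[of "(1 - \<theta>) * c" a b] assms(1)
    by (intro has_integral_mult_right has_integral_add) auto
  have cont: "continuous_on {a..b} (\<lambda>x. f x powr \<theta>)"
    using assms(2-4) by (rule continuous_on_powr_nonneg)
  have "integral {a..b} (\<lambda>x. f x powr \<theta>) \<le>
      integral {a..b} (\<lambda>x. c powr (\<theta> - 1) * (\<theta> * f x + (1 - \<theta>) * c))"
    using assms(3-5) c0
    by (intro integral_le[OF integrable_continuous_interval[OF cont] has_integral_integrable[OF mean]]
        powr_le_tangent_line) auto
  also have "\<dots> = c powr (\<theta> - 1) * c * (b - a)"
    using integral_unique[OF mean] unfolding Jc by (simp add: algebra_simps)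
  also have "\<dots> = c powr \<theta> * ((b - a) powr (1 - \<theta>) * (b - a) powr \<theta>)"
    using c0 assms(1) by (simp add: powr_diff powr_add[symmetric])
  also have "\<dots> = (b - a) powr (1 - \<theta>) * J powr \<theta>"
    using c0 assms(1) unfolding Jc by (simp add: powr_mult mult_ac)
  finally show ?thesis by (simp add: J_def)
qed

lemma integral_power_le_Lp_norm_power_finite:
  fixes g :: "real \<Rightarrow> real" and P :: real
  assumes "a < b" "continuous_on {a..b} g" "s > 0" "real s \<le> P"
  obtains K where "K > 0" "\<And>h. continuous_on {a..b} h \<Longrightarrow> 0 < Lp_norm a b (ereal P) h \<Longrightarrow>
     \<bar>integral {a..b} (\<lambda>x. g x * h x ^ s)\<bar> \<le> K * Lp_norm a b (ereal P) h ^ s"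
proof -
  obtain M where M: "M > 0" "\<And>x. x \<in> {a..b} \<Longrightarrow> \<bar>g x\<bar> \<le> M"
    using continuous_on_interval_bounded[OF assms(2)] by blast
  define \<theta> where "\<theta> = real s / P"
  have P0: "P > 0" using assms by simp
  have \<theta>: "0 < \<theta>" "\<theta> \<le> 1" using assms P0 by (auto simp: \<theta>_def)
  show ?thesis
  proof (rule that[of "M * (b - a) powr (1 - \<theta>)"])
    show "0 < M * (b - a) powr (1 - \<theta>)" using M assms by simp
    fix h :: "real \<Rightarrow> real" assume hc: "continuous_on {a..b} h"
    define J where "J = integral {a..b} (\<lambda>x. \<bar>h x\<bar> powr P)"
    have NJ: "Lp_norm a b (ereal P) h = J powr (1 / P)" by (simp add: Lp_norm_def J_def)
    have cont: "continuous_on {a..b} (\<lambda>x. \<bar>h x\<bar> powr P)"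
      by (rule continuous_on_powr_nonneg[OF continuous_on_rabs[OF hc] _ P0]) simp
    assume "0 < Lp_norm a b (ereal P) h"
    then have "J \<noteq> 0" using NJ by auto
    moreover have "J \<ge> 0" unfolding J_def
      by (intro integral_nonneg integrable_continuous_interval cont) simp
    ultimately have "J > 0" by simp
    have "norm (integral {a..b} (\<lambda>x. g x * h x ^ s)) \<le>
          integral {a..b} (\<lambda>x. M * (\<bar>h x\<bar> powr P) powr \<theta>)"
    proof (rule integral_norm_bound_integral)
      show "(\<lambda>x. g x * h x ^ s) integrable_on {a..b}"
        by (intro integrable_continuous_interval continuous_intros assms(2) hc)
      show "(\<lambda>x. M * (\<bar>h x\<bar> powr P) powr \<theta>) integrable_on {a..b}"
        by (intro integrable_continuous_interval continuous_on_mult_left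
            continuous_on_powr_nonneg[OF cont _ \<theta>(1)]) simp
      fix x assume x: "x \<in> {a..b}"
      have "\<bar>g x * h x ^ s\<bar> = \<bar>g x\<bar> * (\<bar>h x\<bar> powr P) powr \<theta>"
        using abs_power_eq_powr_powr[OF P0 assms(3), of "h x"]
        by (simp add: abs_mult power_abs \<theta>_def)
      then show "norm (g x * h x ^ s) \<le> M * (\<bar>h x\<bar> powr P) powr \<theta>"
        using M(2)[OF x] by (simp add: mult_right_mono)
    qed
    also have "\<dots> \<le> M * ((b - a) powr (1 - \<theta>) * J powr \<theta>)"
      using integral_powr_le_powr_integral[OF assms(1) cont _ \<theta>] \<open>J > 0\<close> M(1)
      by (simp add: J_def)
    also have "J powr \<theta> = Lp_norm a b (ereal P) h ^ s"
      using NJ \<open>J > 0\<close> P0 by (simp add: powr_realpow[symmetric] powr_powr \<theta>_def)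
    finally show "\<bar>integral {a..b} (\<lambda>x. g x * h x ^ s)\<bar> \<le>
        M * (b - a) powr (1 - \<theta>) * Lp_norm a b (ereal P) h ^ s"
      by (simp add: mult.assoc)
  qed
qed

lemma integral_power_le_Lp_norm_power:
  fixes g :: "real \<Rightarrow> real"
  assumes "a < b" "continuous_on {a..b} g" "s > 0" "ereal (real s) \<le> p"
  obtains K where "K > 0" "\<And>h. continuous_on {a..b} h \<Longrightarrow> 0 < Lp_norm a b p h \<Longrightarrow>
     \<bar>integral {a..b} (\<lambda>x. g x * h x ^ s)\<bar> \<le> K * Lp_norm a b p h ^ s"
proof (cases p)
  case (real P)
  then show ?thesis
    using integral_power_le_Lp_norm_power_finite[OF assms(1-3), of P] that assms(4) by auto
next
  case PInf
  then show ?thesis using integral_power_le_sup_norm_power[OF assms(1,2)] that by metis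
qed (use assms(4) in simp)

subsection \<open>Tent functions and the case \<open>p < s\<close>\<close>

definition tent :: "real \<Rightarrow> real \<Rightarrow> real \<Rightarrow> real \<Rightarrow> real" where
  "tent H m w x = H * max 0 (1 - \<bar>x - m\<bar> / w)"

lemma continuous_on_tent: "0 < w \<Longrightarrow> continuous_on S (tent H m w)"
  unfolding tent_def by (intro continuous_intros) auto

lemma tent_nonneg: "0 \<le> H \<Longrightarrow> 0 \<le> tent H m w x"
  by (simp add: tent_def)

lemma tent_le: "0 \<le> H \<Longrightarrow> 0 < w \<Longrightarrow> tent H m w x \<le> H"
  unfolding tent_def by (rule mult_left_le) auto

lemma tent_eq_0: "0 < w \<Longrightarrow> w \<le> \<bar>x - m\<bar> \<Longrightarrow> tent H m w x = 0"
  by (simp add: tent_def)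

lemma tent_centre: "0 < w \<Longrightarrow> tent H m w m = H"
  by (simp add: tent_def)

lemma tent_ge_half:
  assumes "0 \<le> H" "0 < w" "x \<in> {m - w/2..m + w/2}"
  shows "H / 2 \<le> tent H m w x"
proof -
  have "\<bar>x - m\<bar> \<le> w / 2" using assms(3) by (intro abs_leI) auto
  then have "\<bar>x - m\<bar> / w \<le> 1 / 2" using assms(2) by (simp add: field_simps)
  then have "1 / 2 \<le> max 0 (1 - \<bar>x - m\<bar> / w)" by linarith
  then have "H * (1 / 2) \<le> H * max 0 (1 - \<bar>x - m\<bar> / w)"
    using assms(1) by (rule mult_left_mono)
  then show ?thesis by (simp add: tent_def)
qed

lemma tent_in_C0:
  assumes "0 < w" "{m - w..m + w} \<subseteq> {a..b}"
  shows "tent H m w \<in> C0 a b"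
proof -
  have "w \<le> \<bar>a - m\<bar>" "w \<le> \<bar>b - m\<bar>" using assms by auto
  then show ?thesis using assms(1) by (simp add: C0_def continuous_on_tent tent_eq_0)
qed

lemma integral_le_of_support:
  fixes f :: "real \<Rightarrow> real"
  assumes "continuous_on {c..d} f" "\<And>x. x \<notin> {c..d} \<Longrightarrow> f x = 0" "{c..d} \<subseteq> {a..b}" "c \<le> d"
    "\<And>x. x \<in> {c..d} \<Longrightarrow> f x \<le> B"
  shows "integral {a..b} f \<le> B * (d - c)"
proof -
  have i: "f integrable_on {c..d}" using assms(1) by (rule integrable_continuous_interval)
  have "integral {a..b} f = integral {c..d} f"
    by (rule integral_unique, rule has_integral_on_superset[OF integrable_integral[OF i] assms(2,3)])
  also have "\<dots> \<le> integral {c..d} (\<lambda>x. B)" by (rule integral_le[OF i]) (use assms(5) in auto)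
  also have "\<dots> = B * (d - c)" using assms(4) by simp
  finally show ?thesis .
qed

lemma integral_ge_of_subinterval:
  fixes f :: "real \<Rightarrow> real"
  assumes "continuous_on {a..b} f" "{c..d} \<subseteq> {a..b}" "c \<le> d"
    "\<And>x. x \<in> {a..b} \<Longrightarrow> 0 \<le> f x" "\<And>x. x \<in> {c..d} \<Longrightarrow> B \<le> f x"
  shows "B * (d - c) \<le> integral {a..b} f"
proof -
  have i: "f integrable_on {c..d}"
    by (rule integrable_continuous_interval, rule continuous_on_subset[OF assms(1,2)])
  have i_ab: "f integrable_on {a..b}" using assms(1) by (rule integrable_continuous_interval)
  have "B * (d - c) = integral {c..d} (\<lambda>x. B)" using assms(3) by simp
  also have "\<dots> \<le> integral {c..d} f"
    by (rule integral_le[OF integrable_const_ivl i]) (rule assms(5))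
  also have "\<dots> \<le> integral {a..b} f"
    using assms(4) by (intro integral_subset_le[OF assms(2) i i_ab] ballI)
  finally show ?thesis .
qed

lemma Lp_norm_tent_bounds:
  assumes "0 < w" "0 < H" "1 \<le> P" "{m - w..m + w} \<subseteq> {a..b}"
  shows "0 < Lp_norm a b (ereal P) (tent H m w)"
    and "Lp_norm a b (ereal P) (tent H m w) \<le> 2 * H * w powr (1 / P)"
proof -
  define J where "J = integral {a..b} (\<lambda>x. \<bar>tent H m w x\<bar> powr P)"
  have NJ: "Lp_norm a b (ereal P) (tent H m w) = J powr (1 / P)"
    by (simp add: Lp_norm_def J_def)
  have P0: "P > 0" using assms(3) by simp
  have cont: "continuous_on S (\<lambda>x. \<bar>tent H m w x\<bar> powr P)" for S
    by (rule continuous_on_powr_nonneg[OF continuous_on_rabs[OF continuous_on_tent[OF assms(1)]] _ P0])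
      simp
  have "J \<le> H powr P * ((m + w) - (m - w))" unfolding J_def
  proof (rule integral_le_of_support[OF cont _ assms(4)])
    show "\<And>x. x \<notin> {m - w..m + w} \<Longrightarrow> \<bar>tent H m w x\<bar> powr P = 0"
      using assms(1) by (auto simp: tent_eq_0)
    show "\<And>x. \<bar>tent H m w x\<bar> powr P \<le> H powr P"
      using assms(1,2) P0 by (intro powr_mono2) (auto simp: tent_nonneg tent_le)
  qed (use assms(1) in simp)
  then have J_le: "J \<le> H powr P * (2 * w)" by simp
  have "(H / 2) powr P * ((m + w/2) - (m - w/2)) \<le> J" unfolding J_def
  proof (rule integral_ge_of_subinterval[OF cont])
    show "{m - w/2..m + w/2} \<subseteq> {a..b}" using assms(1,4) by auto
    fix x assume "x \<in> {m - w/2..m + w/2}"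
    then have "H / 2 \<le> tent H m w x" using assms(1,2) by (intro tent_ge_half) auto
    then show "(H/2) powr P \<le> \<bar>tent H m w x\<bar> powr P" using assms(2) P0 by (intro powr_mono2) auto
  qed (use assms(1) in simp_all)
  moreover have "0 < (H / 2) powr P * w" using assms(1,2) by simp
  ultimately have "J > 0" by simp
  then show "0 < Lp_norm a b (ereal P) (tent H m w)" using NJ by simp
  have "J powr (1 / P) \<le> (H powr P * (2 * w)) powr (1 / P)"
    using J_le \<open>J > 0\<close> P0 by (intro powr_mono2) auto
  also have "\<dots> = H * 2 powr (1 / P) * w powr (1 / P)"
    using assms(1,2) P0 by (simp add: powr_mult powr_powr)
  also have "\<dots> \<le> H * 2 * w powr (1 / P)"
    using assms(1-3) powr_mono[of "1 / P" 1 2] by (intro mult_right_mono mult_left_mono) auto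
  finally show "Lp_norm a b (ereal P) (tent H m w) \<le> 2 * H * w powr (1 / P)"
    using NJ by simp
qed

lemma powr_neg_inverse_power_mult_self:
  fixes w :: real
  assumes "0 < w" "s > 0"
  shows "(w powr (- 1 / real s)) ^ s * w = 1"
proof -
  have "(w powr (- 1 / real s)) ^ s = w powr (- 1 / real s * real s)"
    using assms(1) by (simp add: powr_realpow[symmetric] powr_powr)
  also have "\<dots> = 1 / w" using assms by (simp add: powr_neg_one)
  finally show ?thesis using assms(1) by simp
qed

lemma Lp_norm_normalised_tent_le:
  assumes "0 < w" "1 \<le> P" "{m - w..m + w} \<subseteq> {a..b}"
  shows "Lp_norm a b (ereal P) (tent (w powr (- 1 / real s)) m w) \<le> 2 * w powr (1 / P - 1 / real s)"
proof -
  have "w powr (- 1 / real s) * w powr (1 / P) = w powr (1 / P - 1 / real s)"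
    by (simp add: powr_add[symmetric])
  then show ?thesis
    using Lp_norm_tent_bounds(2)[OF assms(1) _ assms(2,3), of "w powr (- 1 / real s)"] assms(1)
    by (simp add: mult.assoc)
qed

lemma integral_tent_power_ge:
  assumes "continuous_on {a..b} g" "0 < w" "0 \<le> H" "0 \<le> c" "s > 0"
    "{m - w..m + w} \<subseteq> {a..b}" "\<And>x. x \<in> {m - w..m + w} \<Longrightarrow> c \<le> \<sigma> * g x"
  shows "c * (H / 2) ^ s * w \<le> \<sigma> * integral {a..b} (\<lambda>x. g x * tent H m w x ^ s)"
proof -
  have "c * (H / 2) ^ s * ((m + w/2) - (m - w/2)) \<le> integral {a..b} (\<lambda>x. \<sigma> * g x * tent H m w x ^ s)"
  proof (rule integral_ge_of_subinterval)
    show "continuous_on {a..b} (\<lambda>x. \<sigma> * g x * tent H m w x ^ s)"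
      by (intro continuous_intros assms(1) continuous_on_tent assms(2))
    show "{m - w/2..m + w/2} \<subseteq> {a..b}" using assms(2,6) by auto
    fix x
    show "0 \<le> \<sigma> * g x * tent H m w x ^ s"
    proof (cases "x \<in> {m - w..m + w}")
      case True
      then have "0 \<le> \<sigma> * g x" using assms(4,7) by (meson order_trans)
      then show ?thesis using assms(3) by (simp add: mult_nonneg_nonneg tent_nonneg)
    next
      case False
      then have "w \<le> \<bar>x - m\<bar>" by auto
      then show ?thesis using assms(2,5) by (simp add: tent_eq_0 zero_power)
    qed
    assume x: "x \<in> {m - w/2..m + w/2}"
    then have "c \<le> \<sigma> * g x" using assms(2,7) by auto
    moreover have "(H / 2) ^ s \<le> tent H m w x ^ s"
      using tent_ge_half[OF assms(3,2) x] assms(3) by (intro power_mono) auto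
    ultimately show "c * (H / 2) ^ s \<le> \<sigma> * g x * tent H m w x ^ s"
      using assms(3,4) by (intro mult_mono) auto
  qed (use assms(2) in simp)
  then show ?thesis by (simp add: integral_mult_right mult.assoc)
qed

lemma continuous_nonzero_sign_on_interval:
  fixes g :: "real \<Rightarrow> real"
  assumes "continuous_on {a..b} g" "x0 \<in> {a..b}" "g x0 \<noteq> 0" "a < b"
  obtains u v \<sigma> c where "a \<le> u" "u < v" "v \<le> b" "c > 0" "\<bar>\<sigma>\<bar> = 1"
    "\<And>x. x \<in> {u..v} \<Longrightarrow> c \<le> \<sigma> * g x"
proof -
  define e where "e = \<bar>g x0\<bar> / 2"
  have e0: "e > 0" using assms(3) by (simp add: e_def)
  obtain d where d: "d > 0" "\<And>x. x \<in> {a..b} \<Longrightarrow> dist x x0 < d \<Longrightarrow> dist (g x) (g x0) < e"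
    using assms(1,2) e0 unfolding continuous_on_iff by metis
  define \<sigma> :: real where "\<sigma> = sgn (g x0)"
  show ?thesis
  proof (rule that[of "max a (x0 - d/2)" "min b (x0 + d/2)" e \<sigma>])
    show "max a (x0 - d/2) < min b (x0 + d/2)" using assms(2,4) d(1) by auto
    show "\<bar>\<sigma>\<bar> = 1" using assms(3) by (simp add: \<sigma>_def abs_sgn_eq)
    fix x assume "x \<in> {max a (x0 - d/2)..min b (x0 + d/2)}"
    then have "\<bar>g x - g x0\<bar> < e" using d by (auto simp: dist_real_def)
    moreover have "\<sigma> * g x = \<bar>g x0\<bar> + \<sigma> * (g x - g x0)"
      by (auto simp: \<sigma>_def algebra_simps sgn_if)
    moreover have "\<bar>\<sigma> * (g x - g x0)\<bar> = \<bar>g x - g x0\<bar>"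
      using \<open>\<bar>\<sigma>\<bar> = 1\<close> by (simp add: abs_mult)
    ultimately show "e \<le> \<sigma> * g x" unfolding e_def by linarith
  qed (use e0 in auto)
qed

lemma obtain_small_powr_le:
  fixes e \<eta> r :: real
  assumes "0 < e" "0 < \<eta>" "0 < r"
  obtains w where "0 < w" "w \<le> r" "w powr e \<le> \<eta>"
proof
  define w where "w = min r (\<eta> powr (1 / e))"
  show "0 < w" "w \<le> r" using assms by (auto simp: w_def)
  have "w powr e \<le> (\<eta> powr (1 / e)) powr e"
    using \<open>0 < w\<close> assms by (intro powr_mono2) (auto simp: w_def)
  then show "w powr e \<le> \<eta>" using assms by (simp add: powr_powr)
qed

lemma Lp_ratio_not_vanishing:
  fixes g :: "real \<Rightarrow> real" and P :: real
  assumes "a < b" "continuous_on {a..b} g" "\<exists>x\<in>{a..b}. g x \<noteq> 0" "1 \<le> P" "P < real s"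
  shows "\<not> (\<forall>\<epsilon>>0. \<exists>\<delta>>0. \<forall>h\<in>C0 a b. (\<exists>x\<in>{a..b}. h x \<noteq> 0) \<and> Lp_norm a b (ereal P) h < \<delta> \<longrightarrow>
           \<bar>(1 / Lp_norm a b (ereal P) h) * integral {a..b} (\<lambda>x. g x * h x ^ s)\<bar> < \<epsilon>)"
    (is "\<not> ?vanishes")
proof
  obtain u v \<sigma> c where uv: "a \<le> u" "u < v" "v \<le> b" and c: "c > 0" and \<sigma>: "\<bar>\<sigma>\<bar> = 1"
    and g_sign: "\<And>x. x \<in> {u..v} \<Longrightarrow> c \<le> \<sigma> * g x"
    using assms(3) continuous_nonzero_sign_on_interval[OF assms(2) _ _ assms(1)] by metis
  assume ?vanishes
  moreover have "c / 2 ^ s > 0" using c by simp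
  ultimately obtain \<delta> where \<delta>: "\<delta> > 0" and small: "\<forall>h\<in>C0 a b.
      (\<exists>x\<in>{a..b}. h x \<noteq> 0) \<and> Lp_norm a b (ereal P) h < \<delta> \<longrightarrow>
      \<bar>(1 / Lp_norm a b (ereal P) h) * integral {a..b} (\<lambda>x. g x * h x ^ s)\<bar> < c / 2 ^ s"
    by blast
  define e where "e = 1 / P - 1 / real s"
  have e0: "e > 0" using assms(4,5) by (simp add: e_def frac_less2)
  obtain w where w0: "0 < w" and "w \<le> (v - u) / 2" and w_e: "w powr e \<le> min \<delta> 1 / 4"
    using obtain_small_powr_le[OF e0, of "min \<delta> 1 / 4" "(v - u) / 2"] \<delta> uv by auto
  define m where "m = (u + v) / 2"
  define H where "H = w powr (- 1 / real s)"
  define h where "h = tent H m w"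
  define N where "N = Lp_norm a b (ereal P) h"
  have H0: "H > 0" using w0 by (simp add: H_def)
  have "u \<le> m - w" "m + w \<le> v" using \<open>w \<le> (v - u) / 2\<close> by (simp_all add: m_def field_simps)
  then have sub: "{m - w..m + w} \<subseteq> {u..v}" by auto
  then have sub_ab: "{m - w..m + w} \<subseteq> {a..b}" using uv by auto
  have "N \<le> 2 * w powr e"
    unfolding N_def h_def H_def e_def using w0 assms(4) sub_ab by (rule Lp_norm_normalised_tent_le)
  with w_e have N_le: "N < \<delta>" "N \<le> 1" using \<delta> by linarith+
  have N_pos: "0 < N"
    using Lp_norm_tent_bounds(1)[OF w0 H0 assms(4) sub_ab] by (simp add: N_def h_def)
  have "H ^ s * w = 1" unfolding H_def using w0 assms(4,5) by (intro powr_neg_inverse_power_mult_self) auto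
  then have "c / 2 ^ s = c * (H / 2) ^ s * w" by (simp add: power_divide)
  also have "\<dots> \<le> \<sigma> * integral {a..b} (\<lambda>x. g x * h x ^ s)"
    unfolding h_def using assms(4,5) sub g_sign c H0
    by (intro integral_tent_power_ge[OF assms(2) w0 _ _ _ sub_ab]) auto
  also have "\<dots> \<le> \<bar>integral {a..b} (\<lambda>x. g x * h x ^ s)\<bar>"
    using \<sigma> by (metis abs_ge_self abs_mult mult_1)
  also have "\<dots> \<le> \<bar>(1 / N) * integral {a..b} (\<lambda>x. g x * h x ^ s)\<bar>"
    using N_pos N_le(2) by (simp add: abs_mult le_divide_eq mult_left_le)
  finally have "c / 2 ^ s \<le> \<bar>(1 / N) * integral {a..b} (\<lambda>x. g x * h x ^ s)\<bar>" .
  moreover have "h \<in> C0 a b" unfolding h_def using w0 sub_ab by (rule tent_in_C0)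
  moreover have "m \<in> {a..b}" "h m \<noteq> 0" using w0 sub_ab H0 by (auto simp: h_def tent_centre)
  ultimately show False using small N_le(1) unfolding N_def by fastforce
qed

lemma Lp_ratio_vanishes:
  fixes g :: "real \<Rightarrow> real"
  assumes "a < b" "continuous_on {a..b} g" "s \<ge> 2" "ereal (real s) \<le> p"
  shows "\<forall>\<epsilon>>0. \<exists>\<delta>>0. \<forall>h\<in>C0 a b. (\<exists>x\<in>{a..b}. h x \<noteq> 0) \<and> Lp_norm a b p h < \<delta> \<longrightarrow>
           \<bar>(1 / Lp_norm a b p h) * integral {a..b} (\<lambda>x. g x * h x ^ s)\<bar> < \<epsilon>"
proof -
  have "s > 0" using assms(3) by simp
  then obtain K where "K > 0" and K: "\<And>h. continuous_on {a..b} h \<Longrightarrow> 0 < Lp_norm a b p h \<Longrightarrow>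
      \<bar>integral {a..b} (\<lambda>x. g x * h x ^ s)\<bar> \<le> K * Lp_norm a b p h ^ s"
    using integral_power_le_Lp_norm_power[OF assms(1,2) _ assms(4)] by blast
  show ?thesis
  proof (rule ratio_vanishes_of_power_bound[OF \<open>K > 0\<close> assms(3)])
    fix h assume "h \<in> C0 a b"
    then have "continuous_on {a..b} h" by (simp add: C0_def)
    then show "0 \<le> Lp_norm a b p h" "0 < Lp_norm a b p h \<Longrightarrow>
        \<bar>integral {a..b} (\<lambda>x. g x * h x ^ s)\<bar> \<le> K * Lp_norm a b p h ^ s"
      using assms(1) by (auto intro: Lp_norm_nonneg K)
  qed
qed

theorem lemma1:
  fixes a b :: real and g :: "real \<Rightarrow> real" and s :: nat and p :: ereal
  assumes "a < b"
    and "continuous_on {a..b} g"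
    and "\<exists>x\<in>{a..b}. g x \<noteq> 0"
    and "s \<ge> 2"
    and "1 \<le> p"
  shows "(\<forall>\<epsilon>>0. \<exists>\<delta>>0. \<forall>h\<in>C0 a b.
            (\<exists>x\<in>{a..b}. h x \<noteq> 0) \<and> Lp_norm a b p h < \<delta> \<longrightarrow>
              \<bar>(1 / Lp_norm a b p h) * integral {a..b} (\<lambda>x. g x * h x ^ s)\<bar> < \<epsilon>)
         \<longleftrightarrow> p \<ge> ereal (real s)"
proof (cases "ereal (real s) \<le> p")
  case True
  then show ?thesis using Lp_ratio_vanishes[OF assms(1,2,4) True] by simp
next
  case False
  then obtain P where P: "p = ereal P" "1 \<le> P" "P < real s" using assms(5) by (cases p) auto
  show ?thesis using Lp_ratio_not_vanishing[OF assms(1-3) P(2,3)] False unfolding P(1) by blast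
qed

end
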